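(* A ring $R$ is CSNC if and only if (1) $2\in\mathrm{Nil}(R)$, and (2) for every clean element $a\in R$ there exists an integer $k\ge 0$ such that $a^{2^k}-a^{2^{k+1}}\in\mathrm{Nil}(R)$.
   Context: All rings are associative with identity $1$. For a ring $R$, $\mathrm{Id}(R)$, $U(R)$, $\mathrm{Nil}(R)$ denote the sets of idempotents, units and nilpotent elements. An element $a\in R$ is clean if $a=e+u$ for some $e\in\mathrm{Id}(R)$, $u\in U(R)$. An element $a$ is strongly nil-clean if $a=e+q$ with $e\in \mathrm{Id}(R)$, $q\in\mathrm{Nil}(R)$ and $eq=qe$. A ring $R$ is called CSNC if every clean element of $R$ is strongly nil-clean. *)

theory Defs
  imports Main
begin

definition idem :: "'a::ring_1 \<Rightarrow> bool" where
  "idem e \<longleftrightarrow> e * e = e"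

definition unit_elem :: "'a::ring_1 \<Rightarrow> bool" where
  "unit_elem u \<longleftrightarrow> (\<exists>v. u * v = 1 \<and> v * u = 1)"

definition nilpotent :: "'a::ring_1 \<Rightarrow> bool" where
  "nilpotent q \<longleftrightarrow> (\<exists>n::nat. q ^ n = 0)"

definition clean :: "'a::ring_1 \<Rightarrow> bool" where
  "clean a \<longleftrightarrow> (\<exists>e u. idem e \<and> unit_elem u \<and> a = e + u)"

definition strongly_nil_clean :: "'a::ring_1 \<Rightarrow> bool" where
  "strongly_nil_clean a \<longleftrightarrow> (\<exists>e q. idem e \<and> nilpotent q \<and> e * q = q * e \<and> a = e + q)"

definition CSNC :: "'a::ring_1 itself \<Rightarrow> bool" where
  "CSNC _ \<longleftrightarrow> (\<forall>a::'a. clean a \<longrightarrow> strongly_nil_clean a)"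

end

theory Submission
  imports Defs
begin

text \<open>
  If \<open>a = e + q\<close> is strongly nil-clean then \<open>a - a\<^sup>2 = q (1 - 2e - q)\<close> is nilpotent.
  Conversely, if \<open>a - a\<^sup>2\<close> is nilpotent, the Newton iteration \<open>e \<mapsto> 3e\<^sup>2 - 2e\<^sup>3\<close> started
  at \<open>a\<close> squares the defect \<open>e - e\<^sup>2\<close> at every step while moving \<open>e\<close> only by
  nilpotents commuting with \<open>a\<close>, so it reaches an idempotent \<open>e\<close> with \<open>a - e\<close> nilpotent.
  Hence a ring is CSNC iff \<open>a - a\<^sup>2\<close> is nilpotent for every clean \<open>a\<close>. As \<open>-1\<close> is clean,
  this makes \<open>2 = -((-1) - (-1)\<^sup>2)\<close> nilpotent. Once \<open>2\<close> is nilpotent, the identity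
  \<open>(y - y\<^sup>2)\<^sup>2 = (y\<^sup>2 - y\<^sup>4) + 2 (y\<^sup>4 - y\<^sup>3)\<close> shows that \<open>y - y\<^sup>2\<close> is nilpotent whenever
  \<open>y\<^sup>2 - y\<^sup>4\<close> is, which lets the condition on \<open>a\<^bsup>2^k\<^esup> - a\<^bsup>2^(k+1)\<^esup>\<close> descend to \<open>k = 0\<close>.
\<close>

lemma mult_numeral_commute: "x * numeral n = numeral n * (x::'a::ring_1)"
  by (metis of_nat_numeral mult_of_nat_commute)

lemma mult_numeral_left_commute: "x * (numeral n * y) = numeral n * (x * (y::'a::ring_1))"
  by (metis mult.assoc mult_numeral_commute)

lemma power_mult_commuting:
  fixes x :: "'a::ring_1"
  assumes "x * y = y * x"
  shows "(x * y) ^ n = x ^ n * y ^ n"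
proof (induction n)
  case 0
  then show ?case by simp
next
  case (Suc n)
  have yn_x: "y ^ n * x = x * y ^ n"
    using power_commuting_commutes[of y x n] assms by simp
  have "(x * y) ^ Suc n = x ^ n * (y ^ n * x) * y"
    using Suc by (simp only: power_Suc2 mult.assoc)
  also have "\<dots> = x ^ Suc n * y ^ Suc n"
    by (simp only: yn_x power_Suc2 mult.assoc)
  finally show ?case .
qed

lemma nilpotent_mult_commuting:
  fixes x :: "'a::ring_1"
  assumes "nilpotent x" "x * y = y * x"
  shows "nilpotent (x * y)"
  using assms power_mult_commuting unfolding nilpotent_def by (metis mult_zero_left)

lemma power_add_commuting:
  fixes x :: "'a::ring_1"
  assumes xy: "x * y = y * x"
  shows "\<exists>r. (x + y) ^ k = x ^ k + y * r \<and> r * y = y * r"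
proof (induction k)
  case 0
  show ?case by (intro exI[of _ 0]) simp
next
  case (Suc k)
  then obtain r where r: "(x + y) ^ k = x ^ k + y * r" "r * y = y * r" by blast
  have xk_y: "x ^ k * y = y * x ^ k"
    using power_commuting_commutes[of x y k] xy by simp
  define r' where "r' = x ^ k + x * r + y * r"
  have "(x + y) ^ Suc k = x ^ Suc k + y * r'"
    unfolding r'_def using r(1) xy
    by (simp add: distrib_left distrib_right mult.assoc[symmetric])
  moreover have "r' * y = y * r'"
    unfolding r'_def using r(2) xk_y xy
    by (simp add: distrib_left distrib_right) (metis mult.assoc)
  ultimately show ?case by blast
qed

lemma nilpotent_add_commuting:
  fixes x :: "'a::ring_1"
  assumes "nilpotent x" "nilpotent y" "x * y = y * x"
  shows "nilpotent (x + y)"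
proof -
  obtain n where xn: "x ^ n = 0" using assms(1) nilpotent_def by blast
  obtain m where ym: "y ^ m = 0" using assms(2) nilpotent_def by blast
  obtain r where r: "(x + y) ^ n = x ^ n + y * r" "r * y = y * r"
    using power_add_commuting[OF assms(3)] by blast
  have "(x + y) ^ (n * m) = (y * r) ^ m"
    using r(1) xn by (simp add: power_mult)
  also have "\<dots> = 0"
    using power_mult_commuting[of y r m] r(2) ym by simp
  finally show ?thesis unfolding nilpotent_def by blast
qed

lemma nilpotent_uminus: "nilpotent (x::'a::ring_1) \<Longrightarrow> nilpotent (- x)"
  using nilpotent_mult_commuting[of x "-1"] by simp

lemma nilpotent_power: "nilpotent (x::'a::ring_1) \<Longrightarrow> 0 < m \<Longrightarrow> nilpotent (x ^ m)"
  unfolding nilpotent_def by (metis power_mult mult.commute zero_power)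

lemma nilpotent_square_imp: "nilpotent ((x::'a::ring_1) * x) \<Longrightarrow> nilpotent x"
  unfolding nilpotent_def by (metis power2_eq_square power_mult)

text \<open>
  The elements commuting with everything that commutes with \<open>a\<close> form a commutative
  subring containing \<open>a\<close>; membership discharges the commutativity side conditions of
  the Newton iteration.
\<close>

definition in_bicommutant :: "'a::ring_1 \<Rightarrow> 'a \<Rightarrow> bool" where
  "in_bicommutant a y \<longleftrightarrow> (\<forall>z. z * a = a * z \<longrightarrow> z * y = y * z)"

lemma in_bicommutant_self: "in_bicommutant a a"
  by (simp add: in_bicommutant_def)

lemma in_bicommutant_one: "in_bicommutant a 1"
  by (simp add: in_bicommutant_def)

lemma in_bicommutant_numeral: "in_bicommutant a (numeral n)"
  by (simp add: in_bicommutant_def mult_numeral_commute)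

lemma in_bicommutant_add: "in_bicommutant a x \<Longrightarrow> in_bicommutant a y \<Longrightarrow> in_bicommutant a (x + y)"
  by (simp add: in_bicommutant_def distrib_left distrib_right)

lemma in_bicommutant_diff: "in_bicommutant a x \<Longrightarrow> in_bicommutant a y \<Longrightarrow> in_bicommutant a (x - y)"
  by (simp add: in_bicommutant_def left_diff_distrib right_diff_distrib)

lemma in_bicommutant_mult: "in_bicommutant a x \<Longrightarrow> in_bicommutant a y \<Longrightarrow> in_bicommutant a (x * y)"
  unfolding in_bicommutant_def by (metis mult.assoc)

lemma in_bicommutant_power: "in_bicommutant a x \<Longrightarrow> in_bicommutant a (x ^ n)"
  by (induction n) (simp_all add: in_bicommutant_one in_bicommutant_mult)

lemmas in_bicommutant_intros =
  in_bicommutant_self in_bicommutant_one in_bicommutant_numeral in_bicommutant_add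
  in_bicommutant_diff in_bicommutant_mult in_bicommutant_power

lemma in_bicommutant_commute:
  "in_bicommutant a x \<Longrightarrow> in_bicommutant a y \<Longrightarrow> x * y = y * x"
  unfolding in_bicommutant_def by metis

lemma strongly_nil_clean_imp_nilpotent:
  fixes a :: "'a::ring_1"
  assumes "strongly_nil_clean a"
  shows "nilpotent (a - a * a)"
proof -
  obtain e q where e: "e * e = e" and q: "nilpotent q" and qe: "q * e = e * q" and a: "a = e + q"
    using assms unfolding strongly_nil_clean_def idem_def by metis
  have "a - a * a = q * (1 - e - e - q)"
    unfolding a using e qe by (simp add: algebra_simps)
  moreover have "q * (1 - e - e - q) = (1 - e - e - q) * q"
    using qe by (simp add: algebra_simps)
  ultimately show ?thesis
    using nilpotent_mult_commuting[OF q] by simp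
qed

lemma newton_step_defect:
  fixes e :: "'a::ring_1"
  shows "(3*e*e - 2*e*e*e) - (3*e*e - 2*e*e*e) * (3*e*e - 2*e*e*e)
    = (e - e*e) * (e - e*e) * (3 + 4 * (e - e*e))"
  by (simp add: algebra_simps mult_numeral_commute[of e] mult_numeral_left_commute[of e])
    (simp only: numeral_Bit0 numeral_Bit1 numeral_One distrib_right mult_1_left add_ac)

lemma newton_step_displacement:
  fixes e :: "'a::ring_1"
  shows "(3*e*e - 2*e*e*e) - e = - ((e - e*e) * (1 - 2*e))"
  by (simp add: algebra_simps mult_numeral_commute[of e] mult_numeral_left_commute[of e])
    (simp only: numeral_Bit0 numeral_Bit1 numeral_One distrib_right mult_1_left add_ac)

lemma newton_iteration:
  fixes a :: "'a::ring_1"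
  assumes "nilpotent (a - a * a)"
  shows "\<exists>e s. in_bicommutant a e \<and> in_bicommutant a s \<and> nilpotent (e - a)
           \<and> e - e * e = (a - a * a) ^ (2 ^ k) * s"
proof (induction k)
  case 0
  show ?case
    by (intro exI[of _ a] exI[of _ 1])
      (auto simp: in_bicommutant_intros nilpotent_def intro: exI[of _ 1])
next
  case (Suc k)
  define t where "t = a - a * a"
  have t: "in_bicommutant a t" unfolding t_def by (intro in_bicommutant_intros)
  obtain e s where e: "in_bicommutant a e" and s: "in_bicommutant a s"
    and ea: "nilpotent (e - a)" and defect: "e - e * e = t ^ (2 ^ k) * s"
    using Suc unfolding t_def by blast
  define d where "d = t ^ (2 ^ k)"
  have d: "in_bicommutant a d" unfolding d_def using t by (intro in_bicommutant_intros)
  have ds: "s * d = d * s" using in_bicommutant_commute[OF s d] .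
  define e' where "e' = 3*e*e - 2*e*e*e"
  have e': "in_bicommutant a e'" unfolding e'_def using e by (intro in_bicommutant_intros)
  have "e' - e' * e' = (d * s) * (d * s) * (3 + 4 * (d * s))"
    unfolding e'_def newton_step_defect defect d_def ..
  also have "\<dots> = (d * d) * (s * s) * (3 + 4 * (d * s))"
    by (metis ds mult.assoc)
  also have "\<dots> = t ^ (2 ^ Suc k) * (s * s * (3 + 4 * (d * s)))"
    unfolding d_def by (simp add: mult.assoc mult_2 flip: power_add)
  finally have defect': "e' - e' * e' = t ^ (2 ^ Suc k) * (s * s * (3 + 4 * (d * s)))" .
  have "nilpotent (d * (s * (1 - 2 * e)))"
    using nilpotent_power[OF assms] e s d unfolding d_def t_def
    by (intro nilpotent_mult_commuting in_bicommutant_commute) (auto intro!: in_bicommutant_intros)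
  then have "nilpotent (e' - e)"
    unfolding e'_def newton_step_displacement defect d_def
    by (simp add: mult.assoc nilpotent_uminus)
  then have "nilpotent ((e' - e) + (e - a))"
    using ea e' e by (intro nilpotent_add_commuting in_bicommutant_commute)
      (auto intro!: in_bicommutant_intros)
  moreover have "in_bicommutant a (s * s * (3 + 4 * (d * s)))"
    using s d by (intro in_bicommutant_intros)
  ultimately show ?case
    using e' defect' unfolding t_def
    by (intro exI[of _ e'] exI[of _ "s * s * (3 + 4 * (d * s))"]) auto
qed

lemma nilpotent_imp_strongly_nil_clean:
  fixes a :: "'a::ring_1"
  assumes t: "nilpotent (a - a * a)"
  shows "strongly_nil_clean a"
proof -
  obtain n where tn: "(a - a * a) ^ n = 0" using t nilpotent_def by blast
  obtain e s where e: "in_bicommutant a e" and ea: "nilpotent (e - a)"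
    and defect: "e - e * e = (a - a * a) ^ (2 ^ n) * s"
    using newton_iteration[OF t] by blast
  have "(a - a * a) ^ (2 ^ n) = (a - a * a) ^ n * (a - a * a) ^ (2 ^ n - n)"
    by (simp add: less_imp_le_nat[OF less_exp] flip: power_add)
  then have "idem e" using defect tn unfolding idem_def by simp
  moreover have "nilpotent (a - e)"
    using nilpotent_uminus[OF ea] by simp
  moreover have "e * (a - e) = (a - e) * e"
    using e by (intro in_bicommutant_commute) (auto intro!: in_bicommutant_intros)
  ultimately show ?thesis
    unfolding strongly_nil_clean_def by (intro exI[of _ e] exI[of _ "a - e"]) auto
qed

lemma strongly_nil_clean_iff_nilpotent: "strongly_nil_clean a \<longleftrightarrow> nilpotent (a - a * a)"
  using strongly_nil_clean_imp_nilpotent nilpotent_imp_strongly_nil_clean by blast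

lemma square_defect_identity:
  fixes y :: "'a::ring_1"
  shows "(y - y*y) * (y - y*y) = (y*y - y*y*y*y) + 2 * (y*y*y*y - y*y*y)"
  by (simp add: algebra_simps mult_numeral_commute[of y] mult_numeral_left_commute[of y])
    (simp only: numeral_Bit0 numeral_Bit1 numeral_One distrib_right mult_1_left add_ac)

lemma nilpotent_defect_of_square:
  fixes y :: "'a::ring_1"
  assumes two: "nilpotent (2::'a)" and sq: "nilpotent (y*y - y*y*y*y)"
  shows "nilpotent (y - y*y)"
proof -
  have "nilpotent (2 * (y*y*y*y - y*y*y))"
    using two by (rule nilpotent_mult_commuting) (rule mult_numeral_commute[symmetric])
  then have "nilpotent ((y*y - y*y*y*y) + 2 * (y*y*y*y - y*y*y))"
    using sq by (intro nilpotent_add_commuting in_bicommutant_commute[of y])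
      (auto intro!: in_bicommutant_intros)
  then show ?thesis
    unfolding square_defect_identity[symmetric] by (rule nilpotent_square_imp)
qed

lemma nilpotent_defect_of_power_two:
  fixes a :: "'a::ring_1"
  assumes two: "nilpotent (2::'a)"
  shows "nilpotent (a ^ (2 ^ k) - a ^ (2 ^ (k + 1))) \<Longrightarrow> nilpotent (a - a * a)"
proof (induction k)
  case 0
  then show ?case by (simp add: power2_eq_square)
next
  case (Suc k)
  define y where "y = a ^ (2 ^ k)"
  have "a ^ (2 ^ Suc k) = y * y" "a ^ (2 ^ (Suc k + 1)) = y * y * y * y"
    unfolding y_def by (simp_all flip: power_add add: mult_2 add.assoc)
  then have "nilpotent (y - y * y)"
    using Suc.prems by (intro nilpotent_defect_of_square[OF two]) simp
  then show ?case
    using Suc.IH unfolding y_def by (simp flip: power_add add: mult_2)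
qed

lemma clean_minus_one: "clean (-1::'a::ring_1)"
  unfolding clean_def idem_def unit_elem_def
  by (intro exI[of _ 0] exI[of _ "-1"]) (auto intro: exI[of _ "-1"])

theorem corollary2p11:
  "CSNC TYPE('a::ring_1) \<longleftrightarrow>
     (nilpotent (2::'a) \<and>
      (\<forall>a::'a. clean a \<longrightarrow> (\<exists>k::nat. nilpotent (a ^ (2 ^ k) - a ^ (2 ^ (k + 1))))))"
proof
  assume "CSNC TYPE('a)"
  then have clean_defect: "nilpotent (a - a * a)" if "clean a" for a :: 'a
    using that unfolding CSNC_def strongly_nil_clean_iff_nilpotent by blast
  have "nilpotent (- 2 :: 'a)"
    using clean_defect[OF clean_minus_one] by simp
  then have "nilpotent (2::'a)"
    using nilpotent_uminus by fastforce
  moreover have "nilpotent (a ^ (2 ^ 0) - a ^ (2 ^ (0 + 1)))" if "clean a" for a :: 'a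
    using clean_defect[OF that] by (simp add: power2_eq_square)
  ultimately show "nilpotent (2::'a) \<and>
      (\<forall>a::'a. clean a \<longrightarrow> (\<exists>k::nat. nilpotent (a ^ (2 ^ k) - a ^ (2 ^ (k + 1)))))"
    by blast
next
  assume "nilpotent (2::'a) \<and>
      (\<forall>a::'a. clean a \<longrightarrow> (\<exists>k::nat. nilpotent (a ^ (2 ^ k) - a ^ (2 ^ (k + 1)))))"
  then show "CSNC TYPE('a)"
    unfolding CSNC_def strongly_nil_clean_iff_nilpotent
    using nilpotent_defect_of_power_two by blast
qed

end
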